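(* Let $d,d_\pi\ge1$, $\alpha,\beta,\beta'\in\mathbb{R}$, and let $e$ be a random transition with associated random vectors $\phi_e\in\mathbb{R}^d$ and $\Delta_e\in\mathbb{R}^d$ with $\mathbb{E}_e[\phi_e\Delta_e^\top]=-M$ for a matrix $M\in\mathbb{R}^{d\times d}$. Let $H_w\in\mathbb{R}^{d_\pi\times d}$, $H_\psi\in\mathbb{R}^{d_\pi\times d_\pi}$, and define block matrices on $\mathbb{R}^d\times\mathbb{R}^{d_\pi}$ \[B_e=\begin{pmatrix}I+\alpha\phi_e\Delta_e^\top&0\\0&I\end{pmatrix},\qquad A_0=\begin{pmatrix}(1-\beta')I&0\\\beta H_w&I+\beta H_\psi\end{pmatrix},\] and $\bar\Sigma:=\mathbb{E}_e[A_0B_e-B_eA_0]$. Then the null space of $\bar\Sigma$ contains the entire policy subspace $\{(0,x_\psi):x_\psi\in\mathbb{R}^{d_\pi}\}$.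
   Context: Setting (linear actor-critic): state $\theta=(w,\psi)\in\mathbb{R}^d\times\mathbb{R}^{d_\pi}$ in coordinates centred at an equilibrium $\theta^\star=0$. The expansion is the TD update $P_e(w,\psi)=(w+\alpha\delta(w,e)\phi(s,a),\psi)$ with TD error $\delta(w,e)=r+\gamma_{\mathrm{RL}}\phi(s',a')^\top w-\phi(s,a)^\top w$ for a transition $e=(s,a,r,s')$ (with $a'$ the next action), $\phi_e=\phi(s,a)$, $\Delta_e=\gamma_{\mathrm{RL}}\phi(s',a')-\phi_e$; thus $B_e=DP_e(\theta^\star)$. The baseline consolidation is $Q_0(w,\psi)=((1-\beta')w,\psi+\beta H(w+w^\star,\psi+\psi^\star))$ with $H(w^\star,\psi^\star)=0$, $H_w,H_\psi$ the partial Jacobians of $H$ at the equilibrium, so $A_0=DQ_0(\theta^\star)$. $\bar\Sigma$ is the first-moment commutator Jacobian. *)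

theory Defs
  imports "HOL-Analysis.Analysis" "HOL-Probability.Probability"
begin

definition outer :: "real^'n \<Rightarrow> real^'m \<Rightarrow> real^'m^'n" where
  "outer u v = (\<chi> i j. u $ i * v $ j)"

text \<open>Block matrix [[P, Q], [R, S]] acting on R^d x R^dpi, with coordinates
  indexed by the sum type 'd + 'p (Inl = critic block w, Inr = policy block psi).\<close>
definition block ::
  "real^'d^'d \<Rightarrow> real^'p^'d \<Rightarrow> real^'d^'p \<Rightarrow> real^'p^'p \<Rightarrow> real^('d + 'p)^('d + 'p)" where
  "block P Q R S = (\<chi> i j. case i of
      Inl a \<Rightarrow> (case j of Inl b \<Rightarrow> P $ a $ b | Inr b \<Rightarrow> Q $ a $ b)
    | Inr a \<Rightarrow> (case j of Inl b \<Rightarrow> R $ a $ b | Inr b \<Rightarrow> S $ a $ b))"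

definition pair_vec :: "real^'d \<Rightarrow> real^'p \<Rightarrow> real^('d + 'p)" where
  "pair_vec xw xp = (\<chi> i. case i of Inl a \<Rightarrow> xw $ a | Inr b \<Rightarrow> xp $ b)"

definition B_e :: "real \<Rightarrow> real^'d::finite \<Rightarrow> real^'d \<Rightarrow> real^('d + 'p::finite)^('d + 'p)" where
  "B_e \<alpha> \<phi> \<Delta> = block (mat 1 + \<alpha> *\<^sub>R outer \<phi> \<Delta>) 0 0 (mat 1)"

definition A_0 :: "real \<Rightarrow> real \<Rightarrow> real^'d^'p \<Rightarrow> real^'p^'p \<Rightarrow> real^('d + 'p)^('d + 'p)" where
  "A_0 \<beta> \<beta>' Hw Hpsi = block ((1 - \<beta>') *\<^sub>R mat 1) 0 (\<beta> *\<^sub>R Hw) (mat 1 + \<beta> *\<^sub>R Hpsi)"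

end

theory Submission
  imports Defs
begin

text \<open>Scalar multiples of the identity commute with everything, so the critic blocks of
  \<open>A_0 B_e\<close> and \<open>B_e A_0\<close> agree, and \<open>B_e\<close> is the identity on the policy block; hence the
  commutator \<open>A_0 B_e - B_e A_0\<close> is, for every transition, the block matrix whose only
  nonzero block is \<open>\<alpha> \<beta> H_w \<phi>_e \<Delta>_e\<^sup>T\<close> in the lower left corner. It annihilates every vector
  \<open>(0, x_\<psi>)\<close>, and so does its expectation, since evaluation at a fixed vector is a bounded
  linear map and commutes with the Bochner integral (a non-integrable function has integral 0).\<close>

lemma sum_UNIV_Plus:
  fixes g :: "'a::finite + 'b::finite \<Rightarrow> 'c::comm_monoid_add"
  shows "sum g UNIV = (\<Sum>a\<in>UNIV. g (Inl a)) + (\<Sum>b\<in>UNIV. g (Inr b))"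
  using sum.Plus[of "UNIV :: 'a set" "UNIV :: 'b set" g] by (simp add: comp_def)

lemma block_mult:
  "block P Q R S ** block P' Q' R' S' =
     block (P ** P' + Q ** R') (P ** Q' + Q ** S') (R ** P' + S ** R') (R ** Q' + S ** S')"
  by (simp add: vec_eq_iff matrix_matrix_mult_def block_def sum_UNIV_Plus split: sum.split)

lemma block_diff:
  "block P Q R S - block P' Q' R' S' = block (P - P') (Q - Q') (R - R') (S - S')"
  by (simp add: vec_eq_iff block_def split: sum.split)

lemma block_mult_pair_vec:
  "block P Q R S *v pair_vec x y = pair_vec (P *v x + Q *v y) (R *v x + S *v y)"
  by (simp add: vec_eq_iff matrix_vector_mult_def block_def pair_vec_def sum_UNIV_Plus
      split: sum.split)

lemma pair_vec_zero [simp]: "pair_vec 0 0 = 0"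
  by (simp add: vec_eq_iff pair_vec_def split: sum.split)

lemma A_0_B_e_commutator:
  "A_0 \<beta> \<beta>' Hw Hpsi ** B_e \<alpha> \<phi> \<Delta> - B_e \<alpha> \<phi> \<Delta> ** A_0 \<beta> \<beta>' Hw Hpsi =
     block 0 0 ((\<alpha> * \<beta>) *\<^sub>R (Hw ** outer \<phi> \<Delta>)) 0"
  by (simp add: A_0_def B_e_def block_mult block_diff matrix_add_ldistrib matrix_scalar_ac
      scalar_matrix_assoc[symmetric] scaleR_add_right mult.commute)

lemma bounded_linear_matrix_vector_mult_left:
  "bounded_linear (\<lambda>A :: real^'n::finite^'m::finite. A *v x)"
  by (rule bounded_linearI'; simp add: matrix_vector_mult_add_rdistrib scaleR_matrix_vector_assoc)

lemma bounded_linear_integral_eq_zero: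
  fixes T :: "'a::{banach, second_countable_topology} \<Rightarrow> 'b::{banach, second_countable_topology}"
  assumes T: "bounded_linear T" and zero: "\<And>x. x \<in> space M \<Longrightarrow> T (f x) = 0"
  shows "T (integral\<^sup>L M f) = 0"
proof (cases "integrable M f")
  case True
  have "T (integral\<^sup>L M f) = integral\<^sup>L M (\<lambda>x. T (f x))"
    using integral_bounded_linear[OF T True] by simp
  also have "\<dots> = integral\<^sup>L M (\<lambda>_. 0)"
    by (rule Bochner_Integration.integral_cong) (simp_all add: zero)
  finally show ?thesis
    by simp
next
  case False
  then show ?thesis
    using linear_0[OF bounded_linear.linear[OF T]] by (simp add: not_integrable_integral_eq)
qed

theorem theorem4p24:
  fixes Pr :: "'e measure"
    and \<phi> \<Delta> :: "'e \<Rightarrow> real^'d"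
    and M :: "real^'d^'d"
    and Hw :: "real^'d^'p" and Hpsi :: "real^'p^'p"
    and \<alpha> \<beta> \<beta>' :: real
  assumes "prob_space Pr"
    and "integrable Pr (\<lambda>e. outer (\<phi> e) (\<Delta> e))"
    and "prob_space.expectation Pr (\<lambda>e. outer (\<phi> e) (\<Delta> e)) = - M"
  defines "Sigma_bar \<equiv> prob_space.expectation Pr
      (\<lambda>e. A_0 \<beta> \<beta>' Hw Hpsi ** (B_e \<alpha> (\<phi> e) (\<Delta> e) :: real^('d + 'p)^('d + 'p))
         - B_e \<alpha> (\<phi> e) (\<Delta> e) ** A_0 \<beta> \<beta>' Hw Hpsi)"
  shows "\<forall>x\<psi> :: real^'p. Sigma_bar *v pair_vec (0 :: real^'d) x\<psi> = 0"
proof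
  fix x\<psi> :: "real^'p"
  show "Sigma_bar *v pair_vec (0 :: real^'d) x\<psi> = 0"
    unfolding Sigma_bar_def
    by (rule bounded_linear_integral_eq_zero[OF bounded_linear_matrix_vector_mult_left])
      (simp add: A_0_B_e_commutator block_mult_pair_vec)
qed

end
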